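(* Let $T$ be the $H_3(\mathbb R)$-odometer associated with a nested sequence $\Gamma_1\supset\Gamma_2\supset\cdots$ of lattices in $H_3(\mathbb R)$ such that each $\Gamma_n$ is normal in $\Gamma_1$. If $T$ is free, then $\bigcap_{n=1}^\infty p(\Gamma_n)=\{0\}$.
   Context: $H_3(\mathbb R)$: real $3\times3$ upper triangular unipotent matrices; for $g$ with $(1,2)$ entry $t_1$ and $(2,3)$ entry $t_2$, $p(g)=(t_1,t_2)\in\mathbb R^2$. A lattice is a discrete subgroup of finite covolume. The odometer is the left-translation action on $\varprojlim H_3(\mathbb R)/\Gamma_j$ with the inverse limit of the invariant probabilities. Free: a.e. point has trivial stability group. *)

theory Defs
  imports "HOL-Probability.Probability"
begin

text \<open>The Heisenberg group H_3(R): the unipotent upper triangular matrix with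
(1,2) entry a, (2,3) entry b and (1,3) entry c is encoded as the triple (a,b,c).
Its topology and Haar measure are those of R^3 (lborel) in these coordinates.\<close>

type_synonym h3 = "real \<times> real \<times> real"

fun h3_mult :: "h3 \<Rightarrow> h3 \<Rightarrow> h3" where
  "h3_mult (a, b, c) (a', b', c') = (a + a', b + b', c + c' + a * b')"

fun h3_inv :: "h3 \<Rightarrow> h3" where
  "h3_inv (a, b, c) = (- a, - b, a * b - c)"

definition h3_one :: h3 where
  "h3_one = (0, 0, 0)"

fun h3_p :: "h3 \<Rightarrow> real \<times> real" where
  "h3_p (a, b, c) = (a, b)"

definition h3_subgroup :: "h3 set \<Rightarrow> bool" where
  "h3_subgroup G \<longleftrightarrow> h3_one \<in> G \<and> (\<forall>x\<in>G. \<forall>y\<in>G. h3_mult x y \<in> G)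
     \<and> (\<forall>x\<in>G. h3_inv x \<in> G)"

text \<open>Lattice: discrete subgroup of finite covolume (there is a Borel set of finite
Haar measure whose right translates by the subgroup cover the group).\<close>
definition h3_lattice :: "h3 set \<Rightarrow> bool" where
  "h3_lattice G \<longleftrightarrow> h3_subgroup G
     \<and> (\<exists>\<epsilon>>0. \<forall>\<gamma>\<in>G. \<gamma> \<noteq> h3_one \<longrightarrow> dist \<gamma> h3_one \<ge> \<epsilon>)
     \<and> (\<exists>F \<in> sets lborel. emeasure lborel F < \<infinity>
          \<and> (\<forall>g. \<exists>f\<in>F. \<exists>\<gamma>\<in>G. g = h3_mult f \<gamma>))"

definition h3_normal_in :: "h3 set \<Rightarrow> h3 set \<Rightarrow> bool" where
  "h3_normal_in N G \<longleftrightarrow> (\<forall>g\<in>G. \<forall>n\<in>N. h3_mult (h3_mult g n) (h3_inv g) \<in> N)"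

text \<open>Left cosets g Gamma, i.e. the points of H_3(R)/Gamma.\<close>
definition h3_cosets :: "h3 set \<Rightarrow> h3 set set" where
  "h3_cosets G = {h3_mult g ` G | g. True}"

text \<open>Points of the inverse limit of H_3(R)/Gamma_j.\<close>
definition odo_space :: "(nat \<Rightarrow> h3 set) \<Rightarrow> (nat \<Rightarrow> h3 set) set" where
  "odo_space \<Gamma> = {x. \<forall>j. x j \<in> h3_cosets (\<Gamma> j) \<and> x (Suc j) \<subseteq> x j}"

text \<open>Borel sets of H_3(R)/Gamma: sets of cosets whose union is Borel.\<close>
definition quot_borel :: "h3 set \<Rightarrow> h3 set set set" where
  "quot_borel G = {S. S \<subseteq> h3_cosets G \<and> \<Union>S \<in> sets borel}"

definition odo_sigma :: "(nat \<Rightarrow> h3 set) \<Rightarrow> (nat \<Rightarrow> h3 set) measure" where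
  "odo_sigma \<Gamma> = sigma (odo_space \<Gamma>)
     {{x \<in> odo_space \<Gamma>. x j \<in> S} | j S. S \<in> quot_borel (\<Gamma> j)}"

definition odo_act :: "h3 \<Rightarrow> (nat \<Rightarrow> h3 set) \<Rightarrow> (nat \<Rightarrow> h3 set)" where
  "odo_act g x = (\<lambda>j. h3_mult g ` x j)"

definition odo_stab :: "(nat \<Rightarrow> h3 set) \<Rightarrow> h3 set" where
  "odo_stab x = {g. odo_act g x = x}"

text \<open>The odometer measure: a probability on the inverse limit whose image on each
H_3(R)/Gamma_j is the (unique) H_3(R)-invariant probability; such a measure is unique,
so this is the inverse limit of the invariant probabilities.\<close>
definition odo_measure :: "(nat \<Rightarrow> h3 set) \<Rightarrow> (nat \<Rightarrow> h3 set) measure \<Rightarrow> bool" where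
  "odo_measure \<Gamma> \<nu> \<longleftrightarrow> space \<nu> = odo_space \<Gamma> \<and> sets \<nu> = sets (odo_sigma \<Gamma>)
     \<and> prob_space \<nu>
     \<and> (\<forall>j g S. S \<in> quot_borel (\<Gamma> j) \<longrightarrow>
          measure \<nu> {x \<in> odo_space \<Gamma>. x j \<in> (\<lambda>C. h3_mult g ` C) ` S}
            = measure \<nu> {x \<in> odo_space \<Gamma>. x j \<in> S})"

definition odo_free :: "(nat \<Rightarrow> h3 set) \<Rightarrow> bool" where
  "odo_free \<Gamma> \<longleftrightarrow> (\<exists>\<nu>. odo_measure \<Gamma> \<nu> \<and> (AE x in \<nu>. odo_stab x = {h3_one}))"

end

(*
  Suppose a nonzero v lies in p(\<Gamma> n) for every n. A lattice is not contained in the kernel of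
  the linear form q \<mapsto> det(p q, v): otherwise translates of a small cube to ever larger levels of
  this form would all embed disjointly into H_3(R)/\<Gamma>, contradicting finite covolume. So there is
  \<gamma> \<in> \<Gamma> 0 with det(p \<gamma>, v) \<noteq> 0. For h \<in> \<Gamma> n over v the commutator [\<gamma>, h] lies in \<Gamma> n by normality,
  and it is the central element (0, 0, det(p \<gamma>, v)), independent of n. A central element common
  to all \<Gamma> n fixes every point of the inverse limit, so freeness forces it to be trivial.
*)

theory Submission
  imports Defs
begin

lemma emeasure_lborel_translate_vimage:
  fixes t :: "'a::euclidean_space"
  assumes "A \<in> sets borel"
  shows "emeasure lborel ((+) t -` A) = emeasure lborel A"
  using emeasure_distr[of "(+) t" lborel borel A] assms by (simp add: lborel_distr_plus)

lemma emeasure_lborel_fibrewise_vimage: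
  fixes S :: "'a::euclidean_space \<Rightarrow> 'b::euclidean_space \<Rightarrow> 'b"
  assumes meas: "(\<lambda>(x, y). (x, S x y)) \<in> borel_measurable borel"
    and fibre: "\<And>x B. B \<in> sets borel \<Longrightarrow> emeasure lborel (S x -` B) = emeasure lborel B"
    and A: "A \<in> sets borel"
  shows "emeasure lborel ((\<lambda>(x, y). (x, S x y)) -` A) = emeasure lborel A"
proof -
  let ?T = "\<lambda>(x, y). (x, S x y)"
  have sets_eq: "sets (lborel \<Otimes>\<^sub>M lborel) = sets (borel :: ('a \<times> 'b) measure)"
    by (subst lborel_prod) simp
  have A': "A \<in> sets (lborel \<Otimes>\<^sub>M lborel)"
    using A sets_eq by simp
  have TA: "?T -` A \<in> sets (lborel \<Otimes>\<^sub>M lborel)"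
    using measurable_sets[OF meas A] sets_eq by simp
  have "emeasure lborel (?T -` A) = (\<integral>\<^sup>+x. emeasure lborel (Pair x -` (?T -` A)) \<partial>lborel)"
    using lborel.emeasure_pair_measure_alt[OF TA] by (simp add: lborel_prod)
  also have "\<dots> = (\<integral>\<^sup>+x. emeasure lborel (Pair x -` A) \<partial>lborel)"
  proof (rule nn_integral_cong)
    fix x
    have "Pair x -` (?T -` A) = S x -` (Pair x -` A)" by auto
    moreover have "Pair x -` A \<in> sets borel"
      using sets_Pair1[OF A'] by simp
    ultimately show "emeasure lborel (Pair x -` (?T -` A)) = emeasure lborel (Pair x -` A)"
      by (simp add: fibre)
  qed
  also have "\<dots> = emeasure lborel A"
    using lborel.emeasure_pair_measure_alt[OF A'] by (simp add: lborel_prod)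
  finally show ?thesis .
qed

lemma emeasure_lborel_shear_vimage:
  fixes f :: "'a::euclidean_space \<Rightarrow> 'b::euclidean_space"
  assumes f: "f \<in> borel_measurable borel" and A: "A \<in> sets borel"
  shows "emeasure lborel ((\<lambda>(x, y). (x, f x + y)) -` A) = emeasure lborel A"
proof (rule emeasure_lborel_fibrewise_vimage[OF _ _ A])
  have fst: "fst \<in> borel_measurable (borel :: ('a \<times> 'b) measure)"
    by (intro borel_measurable_continuous_onI continuous_intros)
  have snd: "snd \<in> borel_measurable (borel :: ('a \<times> 'b) measure)"
    by (intro borel_measurable_continuous_onI continuous_intros)
  show "(\<lambda>(x, y). (x, f x + y)) \<in> borel_measurable borel"
    unfolding case_prod_beta
    by (intro borel_measurable_Pair borel_measurable_add snd fst measurable_compose[OF fst f])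
  show "emeasure lborel ((+) (f x) -` B) = emeasure lborel B" if "B \<in> sets borel" for x B
    using that by (rule emeasure_lborel_translate_vimage)
qed

lemma emeasure_UN_countable_le:
  assumes I: "countable I" and X: "\<And>i. i \<in> I \<Longrightarrow> X i \<in> sets M"
  shows "emeasure M (\<Union>(X ` I)) \<le> (\<integral>\<^sup>+i. emeasure M (X i) \<partial>count_space I)"
proof -
  have "emeasure M (\<Union>(X ` I)) = (\<integral>\<^sup>+x. indicator (\<Union>(X ` I)) x \<partial>M)"
    using X I by (intro nn_integral_indicator[symmetric] sets.countable_UN') auto
  also have "\<dots> \<le> (\<integral>\<^sup>+x. \<integral>\<^sup>+i. indicator (X i) x \<partial>count_space I \<partial>M)"
  proof (rule nn_integral_mono)
    fix x
    show "indicator (\<Union>(X ` I)) x \<le> (\<integral>\<^sup>+i. indicator (X i) x \<partial>count_space I)"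
    proof (cases "x \<in> \<Union>(X ` I)")
      case True
      then obtain j where "j \<in> I" "x \<in> X j" by auto
      then have "(\<integral>\<^sup>+i. indicator {j} i \<partial>count_space I) \<le> (\<integral>\<^sup>+i. indicator (X i) x \<partial>count_space I)"
        by (intro nn_integral_mono) (auto split: split_indicator)
      moreover have "(\<integral>\<^sup>+i. indicator {j} i \<partial>count_space I) = (1::ennreal)"
        using \<open>j \<in> I\<close> by (simp add: nn_integral_indicator)
      ultimately show ?thesis using True by simp
    qed simp
  qed
  also have "\<dots> = (\<integral>\<^sup>+i. \<integral>\<^sup>+x. indicator (X i) x \<partial>M \<partial>count_space I)"
    using X by (intro nn_integral_count_space_nn_integral I) auto
  also have "\<dots> = (\<integral>\<^sup>+i. emeasure M (X i) \<partial>count_space I)"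
    using X by (intro nn_integral_cong) simp
  finally show ?thesis .
qed

lemma h3_mult_eq:
  "h3_mult p q = (fst p + fst q, fst (snd p) + fst (snd q), snd (snd p) + snd (snd q) + fst p * fst (snd q))"
  by (cases p; cases q) auto

lemma h3_inv_eq: "h3_inv p = (- fst p, - fst (snd p), fst p * fst (snd p) - snd (snd p))"
  by (cases p) auto

lemma h3_mult_assoc: "h3_mult (h3_mult p q) r = h3_mult p (h3_mult q r)"
  by (simp add: h3_mult_eq algebra_simps)

lemma h3_mult_one_left [simp]: "h3_mult h3_one p = p"
  by (simp add: h3_mult_eq h3_one_def)

lemma h3_mult_one_right [simp]: "h3_mult p h3_one = p"
  by (simp add: h3_mult_eq h3_one_def)

lemma h3_mult_inv_left [simp]: "h3_mult (h3_inv p) p = h3_one"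
  by (simp add: h3_mult_eq h3_inv_eq h3_one_def)

lemma h3_mult_inv_right [simp]: "h3_mult p (h3_inv p) = h3_one"
  by (simp add: h3_mult_eq h3_inv_eq h3_one_def)

lemma h3_mult_inv_cancel_left [simp]: "h3_mult (h3_inv p) (h3_mult p q) = q"
  by (simp flip: h3_mult_assoc)

lemma h3_mult_cancel_left_inv [simp]: "h3_mult p (h3_mult (h3_inv p) q) = q"
  by (simp flip: h3_mult_assoc)

lemma h3_mult_inv_cancel_right [simp]: "h3_mult (h3_mult q p) (h3_inv p) = q"
  by (simp add: h3_mult_assoc)

lemma h3_inv_mult: "h3_inv (h3_mult p q) = h3_mult (h3_inv q) (h3_inv p)"
  by (simp add: h3_mult_eq h3_inv_eq algebra_simps)

lemma h3_mult_inv_eq_one_iff: "h3_mult (h3_inv p) q = h3_one \<longleftrightarrow> q = p"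
  by (metis h3_mult_cancel_left_inv h3_mult_inv_left h3_mult_one_right)

lemma h3_quotient_mult_left: "h3_mult (h3_inv (h3_mult r p)) (h3_mult r q) = h3_mult (h3_inv p) q"
  by (simp add: h3_inv_mult h3_mult_assoc)

lemma dist_h3_one: "dist p h3_one = norm p"
  by (simp add: h3_one_def dist_norm zero_prod_def[symmetric])

lemma h3_subgroup_mult_inv:
  "h3_subgroup G \<Longrightarrow> p \<in> G \<Longrightarrow> q \<in> G \<Longrightarrow> h3_mult (h3_inv p) q \<in> G"
  by (simp add: h3_subgroup_def)

lemma continuous_on_h3_mult [continuous_intros]:
  "continuous_on S f \<Longrightarrow> continuous_on S g \<Longrightarrow> continuous_on S (\<lambda>q. h3_mult (f q) (g q))"
  unfolding h3_mult_eq by (intro continuous_intros)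

lemma h3_mult_left_measurable: "h3_mult p \<in> borel_measurable borel"
  by (intro borel_measurable_continuous_onI continuous_intros)

lemma h3_mult_right_measurable: "(\<lambda>q. h3_mult q p) \<in> borel_measurable borel"
  by (intro borel_measurable_continuous_onI continuous_intros)

lemma emeasure_lborel_h3_shear_vimage:
  fixes A :: "h3 set"
  assumes A: "A \<in> sets borel"
  shows "emeasure lborel ((\<lambda>(x, y, z). (x, y, z + l * x + m * y)) -` A) = emeasure lborel A"
proof -
  have "(\<lambda>(x, y, z). (x, y, z + l * x + m * y)) = (\<lambda>(x, w). (x, (\<lambda>(y, z). (y, (l * x + m * y) + z)) w))"
    by (auto simp: algebra_simps)
  moreover have "emeasure lborel ((\<lambda>(x, w). (x, (\<lambda>(y, z). (y, (l * x + m * y) + z)) w)) -` A)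
      = emeasure lborel A"
  proof (rule emeasure_lborel_fibrewise_vimage[OF _ _ A])
    show "(\<lambda>(x, w). (x, (\<lambda>(y, z). (y, (l * x + m * y) + z)) w)) \<in> borel_measurable borel"
      unfolding case_prod_beta by (intro borel_measurable_continuous_onI continuous_intros)
    show "emeasure lborel ((\<lambda>(y, z). (y, (l * x + m * y) + z)) -` B) = emeasure lborel B"
      if "B \<in> sets borel" for x B
      by (rule emeasure_lborel_shear_vimage[OF _ that])
        (intro borel_measurable_continuous_onI continuous_intros)
  qed
  ultimately show ?thesis by simp
qed

lemma emeasure_lborel_h3_affine_vimage:
  fixes T :: "h3 \<Rightarrow> h3"
  assumes A: "A \<in> sets borel"
    and T: "\<And>q. T q = p + (fst q, fst (snd q), snd (snd q) + l * fst q + m * fst (snd q))"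
  shows "emeasure lborel (T -` A) = emeasure lborel A"
proof -
  have vimage_eq: "T -` A = (\<lambda>(x, y, z). (x, y, z + l * x + m * y)) -` ((+) p -` A)"
    by (auto simp: T)
  have "(+) p -` A \<in> sets borel"
    using measurable_sets[OF _ A, of "(+) p" borel]
    by (simp add: borel_measurable_continuous_onI continuous_intros)
  then show ?thesis
    unfolding vimage_eq
    by (simp add: emeasure_lborel_h3_shear_vimage emeasure_lborel_translate_vimage A)
qed

lemma emeasure_lborel_h3_mult_left_vimage:
  assumes "A \<in> sets borel"
  shows "emeasure lborel (h3_mult p -` A) = emeasure lborel A"
proof (rule emeasure_lborel_h3_affine_vimage[OF assms])
  show "h3_mult p q = p + (fst q, fst (snd q), snd (snd q) + 0 * fst q + fst p * fst (snd q))" for q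
    by (cases p; cases q) (simp add: algebra_simps)
qed

lemma emeasure_lborel_h3_mult_right_vimage:
  assumes "A \<in> sets borel"
  shows "emeasure lborel ((\<lambda>q. h3_mult q p) -` A) = emeasure lborel A"
proof (rule emeasure_lborel_h3_affine_vimage[OF assms])
  show "h3_mult q p = p + (fst q, fst (snd q), snd (snd q) + fst (snd p) * fst q + 0 * fst (snd q))"
    for q by (cases p; cases q) (simp add: algebra_simps)
qed

definition h3_cube :: "real \<Rightarrow> h3 set" where
  "h3_cube \<delta> = {-\<delta><..<\<delta>} \<times> {-\<delta><..<\<delta>} \<times> {-\<delta><..<\<delta>}"

lemma open_h3_cube: "open (h3_cube \<delta>)"
  unfolding h3_cube_def by (intro open_Times open_greaterThanLessThan)

lemma emeasure_lborel_h3_cube: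
  assumes "0 \<le> \<delta>"
  shows "emeasure lborel (h3_cube \<delta>) = ennreal ((2 * \<delta>) ^ 3)"
proof -
  have interval: "emeasure lborel {-\<delta><..<\<delta>} = ennreal (2 * \<delta>)"
    using assms by simp
  have square_sets: "{-\<delta><..<\<delta>} \<times> {-\<delta><..<\<delta>} \<in> sets (borel :: (real \<times> real) measure)"
    by (intro borel_open open_Times) auto
  have "emeasure (lborel :: (real \<times> real) measure) ({-\<delta><..<\<delta>} \<times> {-\<delta><..<\<delta>}) = ennreal ((2 * \<delta>) ^ 2)"
    using lborel.emeasure_pair_measure_Times[of "{-\<delta><..<\<delta>}" lborel "{-\<delta><..<\<delta>}"]
    by (simp add: lborel_prod interval ennreal_mult[symmetric] power2_eq_square assms)
  then show ?thesis
    using lborel.emeasure_pair_measure_Times[of "{-\<delta><..<\<delta>}" lborel "{-\<delta><..<\<delta>} \<times> {-\<delta><..<\<delta>}"]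
    by (simp add: lborel_prod h3_cube_def interval ennreal_mult[symmetric] power3_eq_cube
        power2_eq_square assms square_sets)
qed

lemma norm_h3_le: "norm (p :: h3) \<le> \<bar>fst p\<bar> + \<bar>fst (snd p)\<bar> + \<bar>snd (snd p)\<bar>"
  using norm_Pair_le[of "fst p" "snd p"] norm_Pair_le[of "fst (snd p)" "snd (snd p)"] by simp

lemma norm_h3_quotient_cube:
  assumes "\<delta> \<le> 1" "p \<in> h3_cube \<delta>" "q \<in> h3_cube \<delta>"
  shows "norm (h3_mult (h3_inv p) q) < 8 * \<delta>"
proof -
  obtain p1 p2 p3 q1 q2 q3 where pq: "p = (p1, p2, p3)" "q = (q1, q2, q3)"
    by (cases p, cases q) auto
  have bounds: "\<bar>p1\<bar> < \<delta>" "\<bar>p2\<bar> < \<delta>" "\<bar>p3\<bar> < \<delta>" "\<bar>q1\<bar> < \<delta>" "\<bar>q2\<bar> < \<delta>" "\<bar>q3\<bar> < \<delta>"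
    using assms(2,3) by (auto simp: h3_cube_def pq)
  have "\<bar>p1 * (q2 - p2)\<bar> \<le> 1 * (2 * \<delta>)"
    unfolding abs_mult using bounds assms(1) by (intro mult_mono) auto
  then have "\<bar>q3 - p3 - p1 * (q2 - p2)\<bar> < 4 * \<delta>"
    using bounds by linarith
  moreover have "\<bar>q1 - p1\<bar> < 2 * \<delta>" "\<bar>q2 - p2\<bar> < 2 * \<delta>"
    using bounds by (auto simp: abs_less_iff)
  moreover have "h3_mult (h3_inv p) q = (q1 - p1, q2 - p2, q3 - p3 - p1 * (q2 - p2))"
    by (simp add: pq algebra_simps)
  ultimately show ?thesis
    using norm_h3_le[of "h3_mult (h3_inv p) q"] by simp
qed

text \<open>The right translates B \<gamma>\<inverse>, \<gamma> \<in> G, are pairwise disjoint, i.e. B embeds into H_3(R)/G.\<close>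

definition h3_disjoint_translates :: "h3 set \<Rightarrow> h3 set \<Rightarrow> bool" where
  "h3_disjoint_translates G B \<longleftrightarrow>
     (\<forall>q. \<forall>\<gamma>\<in>G. \<forall>\<gamma>'\<in>G. h3_mult q \<gamma> \<in> B \<longrightarrow> h3_mult q \<gamma>' \<in> B \<longrightarrow> \<gamma> = \<gamma>')"

lemma h3_lattice_disjoint_cube:
  assumes "h3_lattice G"
  obtains \<delta> where "0 < \<delta>" "h3_disjoint_translates G (h3_cube \<delta>)"
proof -
  obtain \<epsilon> where "\<epsilon> > 0" and discrete: "\<And>\<gamma>. \<gamma> \<in> G \<Longrightarrow> \<gamma> \<noteq> h3_one \<Longrightarrow> \<epsilon> \<le> norm \<gamma>"
    using assms by (auto simp: h3_lattice_def dist_h3_one)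
  define \<delta> where "\<delta> = min 1 (\<epsilon> / 8)"
  have "h3_disjoint_translates G (h3_cube \<delta>)"
    unfolding h3_disjoint_translates_def
  proof (intro allI ballI impI)
    fix q \<gamma> \<gamma>' assume \<gamma>: "\<gamma> \<in> G" "\<gamma>' \<in> G"
      and cube: "h3_mult q \<gamma> \<in> h3_cube \<delta>" "h3_mult q \<gamma>' \<in> h3_cube \<delta>"
    have "norm (h3_mult (h3_inv \<gamma>) \<gamma>') < 8 * \<delta>"
      using norm_h3_quotient_cube[OF _ cube] by (simp add: h3_quotient_mult_left \<delta>_def)
    also have "8 * \<delta> \<le> \<epsilon>"
      by (simp add: \<delta>_def)
    finally have "norm (h3_mult (h3_inv \<gamma>) \<gamma>') < \<epsilon>" .
    moreover have "h3_mult (h3_inv \<gamma>) \<gamma>' \<in> G"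
      using assms \<gamma> by (simp add: h3_lattice_def h3_subgroup_mult_inv)
    ultimately have "h3_mult (h3_inv \<gamma>) \<gamma>' = h3_one"
      using discrete by (meson not_less)
    then show "\<gamma> = \<gamma>'"
      by (simp add: h3_mult_inv_eq_one_iff)
  qed
  moreover have "0 < \<delta>" using \<open>\<epsilon> > 0\<close> by (simp add: \<delta>_def)
  ultimately show thesis using that by blast
qed

lemma h3_lattice_countable:
  assumes "h3_lattice G"
  shows "countable G"
proof -
  obtain \<delta> where "0 < \<delta>" and disjoint: "h3_disjoint_translates G (h3_cube \<delta>)"
    using h3_lattice_disjoint_cube[OF assms] by blast
  define U where "U \<gamma> = (\<lambda>q. h3_mult q \<gamma>) -` h3_cube \<delta>" for \<gamma>
  have inv_in_U: "h3_inv \<gamma> \<in> U \<gamma>" for \<gamma>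
    using \<open>0 < \<delta>\<close> by (simp add: U_def h3_cube_def h3_one_def)
  have U_eq: "\<gamma> = \<gamma>'" if "\<gamma> \<in> G" "\<gamma>' \<in> G" "q \<in> U \<gamma>" "q \<in> U \<gamma>'" for q \<gamma> \<gamma>'
    using disjoint that unfolding h3_disjoint_translates_def U_def by blast
  have "countable (U ` G)"
  proof (rule countable_disjoint_open_subsets)
    show "open S" if "S \<in> U ` G" for S
      using that unfolding U_def
      by (auto intro!: continuous_open_vimage open_h3_cube continuous_intros)
    show "pairwise disjnt (U ` G)"
      unfolding pairwise_def disjnt_def using U_eq by blast
  qed
  moreover have "inj_on U G"
    using U_eq inv_in_U by (metis inj_onI)
  ultimately show ?thesis
    by (rule countable_image_inj_on)
qed

lemma emeasure_lborel_le_h3_cover: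
  assumes G: "countable G" and F: "F \<in> sets borel"
    and cover: "\<And>g. \<exists>f\<in>F. \<exists>\<gamma>\<in>G. g = h3_mult f \<gamma>"
    and B: "B \<in> sets borel" and disjoint: "h3_disjoint_translates G B"
  shows "emeasure lborel B \<le> emeasure lborel F"
proof -
  txt \<open>B is covered by the pieces C \<gamma> = B \<inter> F \<gamma>, which right translation moves to disjoint
    subsets A \<gamma> of F.\<close>
  define A where "A \<gamma> = F \<inter> (\<lambda>f. h3_mult f \<gamma>) -` B" for \<gamma>
  define C where "C \<gamma> = (\<lambda>q. h3_mult q (h3_inv \<gamma>)) -` A \<gamma>" for \<gamma>
  have A_sets: "A \<gamma> \<in> sets borel" for \<gamma>
    using F measurable_sets[OF h3_mult_right_measurable B] by (simp add: A_def)
  have C_sets: "C \<gamma> \<in> sets borel" for \<gamma>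
    using measurable_sets[OF h3_mult_right_measurable A_sets] by (simp add: C_def)
  have "B \<subseteq> \<Union>(C ` G)"
  proof
    fix b assume "b \<in> B"
    moreover obtain f \<gamma> where "f \<in> F" "\<gamma> \<in> G" "b = h3_mult f \<gamma>"
      using cover by blast
    ultimately have "b \<in> C \<gamma>"
      by (simp add: C_def A_def)
    with \<open>\<gamma> \<in> G\<close> show "b \<in> \<Union>(C ` G)"
      by blast
  qed
  then have "emeasure lborel B \<le> emeasure lborel (\<Union>(C ` G))"
    using C_sets G by (intro emeasure_mono sets.countable_UN') auto
  also have "\<dots> \<le> (\<integral>\<^sup>+\<gamma>. emeasure lborel (C \<gamma>) \<partial>count_space G)"
    using C_sets G by (intro emeasure_UN_countable_le) auto
  also have "\<dots> = (\<integral>\<^sup>+\<gamma>. emeasure lborel (A \<gamma>) \<partial>count_space G)"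
    using A_sets by (simp add: C_def emeasure_lborel_h3_mult_right_vimage)
  also have "\<dots> = emeasure lborel (\<Union>(A ` G))"
  proof (rule emeasure_UN_countable[symmetric])
    show "disjoint_family_on A G"
      using disjoint unfolding disjoint_family_on_def A_def h3_disjoint_translates_def by blast
  qed (use A_sets G in auto)
  also have "\<dots> \<le> emeasure lborel F"
    using F by (intro emeasure_mono) (auto simp: A_def)
  finally show ?thesis .
qed

definition det2 :: "real \<times> real \<Rightarrow> real \<times> real \<Rightarrow> real" where
  "det2 u v = fst u * snd v - fst v * snd u"

lemma det2_add_left: "det2 (u + w) v = det2 u v + det2 w v"
  by (simp add: det2_def algebra_simps)

lemma h3_p_mult: "h3_p (h3_mult p q) = h3_p p + h3_p q"
  by (cases p; cases q) simp

lemma h3_disjoint_translates_Union_levels: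
  fixes \<psi> :: "h3 \<Rightarrow> real"
  assumes C: "h3_disjoint_translates G C"
    and \<psi>_mult: "\<And>p q. \<psi> (h3_mult p q) = \<psi> p + \<psi> q"
    and \<psi>_G: "\<And>\<gamma>. \<gamma> \<in> G \<Longrightarrow> \<psi> \<gamma> = 0"
    and \<psi>_C: "\<And>p. p \<in> C \<Longrightarrow> \<bar>\<psi> p\<bar> < M / 2"
    and \<psi>_g: "\<And>k. \<psi> (g k) = real k * M"
  defines "D k \<equiv> h3_mult (h3_inv (g k)) -` C"
  shows "disjoint_family D" and "h3_disjoint_translates G (\<Union>k<N. D k)"
proof -
  have level: "\<bar>\<psi> q - real k * M\<bar> < M / 2" if "q \<in> D k" for q k
  proof -
    have "\<psi> q = \<psi> (h3_mult (g k) (h3_mult (h3_inv (g k)) q))"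
      by simp
    also have "\<dots> = real k * M + \<psi> (h3_mult (h3_inv (g k)) q)"
      by (simp only: \<psi>_mult \<psi>_g)
    finally show ?thesis
      using \<psi>_C that by (simp add: D_def)
  qed
  have same_level: "k = l" if "q \<in> D k" "q' \<in> D l" "\<psi> q = \<psi> q'" for q q' k l
  proof -
    have M: "0 < M"
      using level[OF that(1)] by linarith
    have "\<bar>(real k - real l) * M\<bar> < M"
      using level[OF that(1)] level[OF that(2)] that(3) unfolding left_diff_distrib by linarith
    then have "\<bar>real k - real l\<bar> < 1"
      using M by (simp add: abs_mult)
    then show ?thesis
      by linarith
  qed
  show "disjoint_family D"
    unfolding disjoint_family_on_def using same_level by blast
  show "h3_disjoint_translates G (\<Union>k<N. D k)"
    unfolding h3_disjoint_translates_def
  proof (intro allI ballI impI)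
    fix q \<gamma> \<gamma>' assume \<gamma>: "\<gamma> \<in> G" "\<gamma>' \<in> G"
      and "h3_mult q \<gamma> \<in> (\<Union>k<N. D k)" "h3_mult q \<gamma>' \<in> (\<Union>k<N. D k)"
    then obtain k l where k: "h3_mult q \<gamma> \<in> D k" and l: "h3_mult q \<gamma>' \<in> D l"
      by blast
    have "k = l"
      using same_level[OF k l] by (simp add: \<psi>_mult \<psi>_G \<gamma>)
    then have "h3_mult (h3_mult (h3_inv (g k)) q) \<gamma> \<in> C" "h3_mult (h3_mult (h3_inv (g k)) q) \<gamma>' \<in> C"
      using k l by (simp_all add: D_def h3_mult_assoc)
    then show "\<gamma> = \<gamma>'"
      using C \<gamma> unfolding h3_disjoint_translates_def by blast
  qed
qed

lemma h3_lattice_det2_nonzero: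
  assumes lat: "h3_lattice G" and v: "v \<noteq> 0"
  shows "\<exists>\<gamma>\<in>G. det2 (h3_p \<gamma>) v \<noteq> 0"
proof (rule ccontr)
  define \<psi> where "\<psi> q = det2 (h3_p q) v" for q
  assume "\<not> ?thesis"
  then have \<psi>_G: "\<And>\<gamma>. \<gamma> \<in> G \<Longrightarrow> \<psi> \<gamma> = 0"
    by (auto simp: \<psi>_def)
  obtain F where F: "F \<in> sets borel" "emeasure lborel F < \<infinity>"
    and cover: "\<And>g. \<exists>f\<in>F. \<exists>\<gamma>\<in>G. g = h3_mult f \<gamma>"
    using lat unfolding h3_lattice_def by auto
  obtain \<delta> where "0 < \<delta>" and cube: "h3_disjoint_translates G (h3_cube \<delta>)"
    using h3_lattice_disjoint_cube[OF lat] by blast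
  obtain a b where ab: "v = (a, b)"
    by (cases v)
  define c where "c = a\<^sup>2 + b\<^sup>2"
  have "0 < c"
    using v by (simp add: c_def ab zero_prod_def sum_power2_gt_zero_iff)
  define M where "M = 2 * (\<bar>a\<bar> + \<bar>b\<bar>) * \<delta> + 1"
  define g where "g k = (real k * M * b / c, - (real k * M * a / c), 0 :: real)" for k :: nat
  have \<psi>_mult: "\<psi> (h3_mult p q) = \<psi> p + \<psi> q" for p q
    by (simp add: \<psi>_def h3_p_mult det2_add_left)
  have \<psi>_g: "\<psi> (g k) = real k * M" for k
    using \<open>0 < c\<close> by (simp add: \<psi>_def g_def ab det2_def field_simps)
      (simp add: c_def power2_eq_square algebra_simps)
  have \<psi>_cube: "\<bar>\<psi> p\<bar> < M / 2" if "p \<in> h3_cube \<delta>" for p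
  proof -
    have "\<bar>fst p\<bar> < \<delta>" "\<bar>fst (snd p)\<bar> < \<delta>"
      using that by (auto simp: h3_cube_def)
    then have "\<bar>fst p * b\<bar> \<le> \<delta> * \<bar>b\<bar>" "\<bar>a * fst (snd p)\<bar> \<le> \<bar>a\<bar> * \<delta>"
      unfolding abs_mult by (auto intro!: mult_right_mono mult_left_mono)
    moreover have "\<psi> p = fst p * b - a * fst (snd p)"
      by (cases p) (simp add: \<psi>_def det2_def ab)
    ultimately show ?thesis
      unfolding M_def by (simp add: algebra_simps)
  qed
  txt \<open>The translates D k = g k \<cdot> cube sit at the separated \<psi>-levels k M, so their unions embed into
    H_3(R)/G and F must have measure at least N times that of the cube, for every N.\<close>
  define D where "D k = h3_mult (h3_inv (g k)) -` h3_cube \<delta>" for k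
  have D_disjoint: "disjoint_family D"
    and UN_disjoint: "\<And>N. h3_disjoint_translates G (\<Union>k<N. D k)"
    using h3_disjoint_translates_Union_levels[OF cube \<psi>_mult \<psi>_G \<psi>_cube \<psi>_g]
    unfolding D_def[abs_def] by simp_all
  have D_sets: "D k \<in> sets borel" for k
    using measurable_sets[OF h3_mult_left_measurable borel_open[OF open_h3_cube]] by (simp add: D_def)
  have D_measure: "emeasure lborel (D k) = ennreal ((2 * \<delta>) ^ 3)" for k
    using \<open>0 < \<delta>\<close> by (simp add: D_def emeasure_lborel_h3_mult_left_vimage borel_open open_h3_cube
        emeasure_lborel_h3_cube)
  have bound: "of_nat N * ennreal ((2 * \<delta>) ^ 3) \<le> emeasure lborel F" for N
  proof -
    have "of_nat N * ennreal ((2 * \<delta>) ^ 3) = (\<Sum>k<N. emeasure lborel (D k))"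
      by (simp add: D_measure)
    also have "\<dots> = emeasure lborel (\<Union>k<N. D k)"
      using D_sets D_disjoint by (intro sum_emeasure) (auto simp: disjoint_family_on_def)
    also have "\<dots> \<le> emeasure lborel F"
      using h3_lattice_countable[OF lat] F(1) cover D_sets UN_disjoint
      by (intro emeasure_lborel_le_h3_cover) auto
    finally show ?thesis .
  qed
  obtain r where r: "emeasure lborel F = ennreal r" "0 \<le> r"
    using F(2) by (cases "emeasure lborel F") auto
  obtain N where N: "r < real N * (2 * \<delta>) ^ 3"
    using \<open>0 < \<delta>\<close> ex_less_of_nat_mult[of "(2 * \<delta>) ^ 3" r] by auto
  have "ennreal (real N * (2 * \<delta>) ^ 3) \<le> ennreal r"
    using bound[of N] r \<open>0 < \<delta>\<close> by (simp add: ennreal_mult ennreal_of_nat_eq_real_of_nat)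
  with N r(2) show False
    by (simp add: ennreal_le_iff)
qed

definition h3_commutator :: "h3 \<Rightarrow> h3 \<Rightarrow> h3" where
  "h3_commutator g h = h3_mult (h3_mult (h3_mult g h) (h3_inv g)) (h3_inv h)"

lemma h3_commutator_eq: "h3_commutator g h = (0, 0, det2 (h3_p g) (h3_p h))"
  by (cases g; cases h) (simp add: h3_commutator_def det2_def algebra_simps)

lemma h3_commutator_in_normal:
  assumes "h3_subgroup N" "h3_normal_in N G" "g \<in> G" "h \<in> N"
  shows "h3_commutator g h \<in> N"
  using assms by (simp add: h3_commutator_def h3_normal_in_def h3_subgroup_def)

lemma h3_commutator_over_common_projection:
  assumes sub: "\<And>n. h3_subgroup (\<Gamma> n)" and normal: "\<And>n. h3_normal_in (\<Gamma> n) (\<Gamma> 0)"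
    and "\<gamma> \<in> \<Gamma> 0" and v: "v \<in> (\<Inter>n. h3_p ` \<Gamma> n)"
  shows "(0, 0, det2 (h3_p \<gamma>) v) \<in> \<Gamma> n"
proof -
  obtain h where "h \<in> \<Gamma> n" "h3_p h = v"
    using v by blast
  then show ?thesis
    using h3_commutator_in_normal[OF sub normal \<open>\<gamma> \<in> \<Gamma> 0\<close> \<open>h \<in> \<Gamma> n\<close>]
    by (simp add: h3_commutator_eq)
qed

lemma h3_central_commute: "h3_mult (0, 0, c) q = h3_mult q (0, 0, c)"
  by (cases q) simp

lemma h3_central_fixes_cosets:
  assumes G: "h3_subgroup G" and z: "z \<in> G" and central: "\<And>q. h3_mult z q = h3_mult q z"
    and C: "C \<in> h3_cosets G"
  shows "h3_mult z ` C = C"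
proof -
  obtain g where C_eq: "C = h3_mult g ` G"
    using C by (auto simp: h3_cosets_def)
  have zG: "h3_mult z ` G = G"
  proof
    show "h3_mult z ` G \<subseteq> G"
      using G z by (auto simp: h3_subgroup_def)
    show "G \<subseteq> h3_mult z ` G"
    proof
      fix \<gamma> assume "\<gamma> \<in> G"
      then have "h3_mult (h3_inv z) \<gamma> \<in> G"
        using G z by (simp add: h3_subgroup_mult_inv)
      moreover have "\<gamma> = h3_mult z (h3_mult (h3_inv z) \<gamma>)"
        by simp
      ultimately show "\<gamma> \<in> h3_mult z ` G"
        by blast
    qed
  qed
  have "h3_mult z (h3_mult g \<gamma>) = h3_mult g (h3_mult z \<gamma>)" for \<gamma>
  proof -
    have "h3_mult z (h3_mult g \<gamma>) = h3_mult (h3_mult z g) \<gamma>"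
      by (simp add: h3_mult_assoc)
    also have "\<dots> = h3_mult (h3_mult g z) \<gamma>"
      by (simp only: central[of g])
    finally show ?thesis
      by (simp add: h3_mult_assoc)
  qed
  then have "h3_mult z ` C = h3_mult g ` (h3_mult z ` G)"
    unfolding C_eq image_image by simp
  then show ?thesis
    using zG C_eq by simp
qed

lemma odo_stab_central:
  assumes G: "\<And>n. h3_subgroup (\<Gamma> n)" and z: "\<And>n. z \<in> \<Gamma> n"
    and central: "\<And>q. h3_mult z q = h3_mult q z" and x: "x \<in> odo_space \<Gamma>"
  shows "z \<in> odo_stab x"
proof -
  have "h3_mult z ` x j = x j" for j
    using x h3_central_fixes_cosets[OF G z central] unfolding odo_space_def by blast
  then show ?thesis
    by (simp add: odo_stab_def odo_act_def)
qed

lemma odo_free_common_stabilizer: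
  assumes "odo_free \<Gamma>" and stab: "\<And>x. x \<in> odo_space \<Gamma> \<Longrightarrow> z \<in> odo_stab x"
  shows "z = h3_one"
proof -
  obtain \<nu> where \<nu>: "odo_measure \<Gamma> \<nu>" and trivial: "AE x in \<nu>. odo_stab x = {h3_one}"
    using assms(1) unfolding odo_free_def by blast
  interpret prob_space \<nu>
    using \<nu> by (simp add: odo_measure_def)
  have "AE x in \<nu>. z = h3_one"
    using trivial AE_space
  proof eventually_elim
    case (elim x)
    then show ?case
      using \<nu> stab by (auto simp: odo_measure_def)
  qed
  then show ?thesis
    by simp
qed

lemma odo_free_central_trivial:
  assumes "odo_free \<Gamma>" "\<And>n. h3_subgroup (\<Gamma> n)" "\<And>n. (0, 0, c) \<in> \<Gamma> n"
  shows "c = 0"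
proof -
  have "(0, 0, c) \<in> odo_stab x" if "x \<in> odo_space \<Gamma>" for x
    by (rule odo_stab_central[OF assms(2,3) h3_central_commute that])
  then have "(0, 0, c) = h3_one"
    by (rule odo_free_common_stabilizer[OF assms(1)])
  then show ?thesis
    by (simp add: h3_one_def)
qed

theorem proposition3p4:
  fixes \<Gamma> :: "nat \<Rightarrow> h3 set"
  assumes lat: "\<And>n. h3_lattice (\<Gamma> n)"
    and nested: "\<And>n. \<Gamma> (Suc n) \<subseteq> \<Gamma> n"
    and normal: "\<And>n. h3_normal_in (\<Gamma> n) (\<Gamma> 0)"
    and free: "odo_free \<Gamma>"
  shows "(\<Inter>n. h3_p ` \<Gamma> n) = {(0, 0)}"
proof
  have sub: "h3_subgroup (\<Gamma> n)" for n
    using lat by (simp add: h3_lattice_def)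
  have "(0, 0) \<in> h3_p ` \<Gamma> n" for n
  proof (rule rev_image_eqI)
    show "h3_one \<in> \<Gamma> n"
      using sub by (simp add: h3_subgroup_def)
  qed (simp add: h3_one_def)
  then show "{(0, 0)} \<subseteq> (\<Inter>n. h3_p ` \<Gamma> n)"
    by blast
  show "(\<Inter>n. h3_p ` \<Gamma> n) \<subseteq> {(0, 0)}"
  proof (rule subsetI, rule ccontr)
    fix v assume v: "v \<in> (\<Inter>n. h3_p ` \<Gamma> n)" and "v \<notin> {(0, 0)}"
    then have "v \<noteq> 0"
      by (simp add: zero_prod_def)
    then obtain \<gamma> where "\<gamma> \<in> \<Gamma> 0" and nonzero: "det2 (h3_p \<gamma>) v \<noteq> 0"
      using h3_lattice_det2_nonzero[OF lat] by blast
    have "(0, 0, det2 (h3_p \<gamma>) v) \<in> \<Gamma> n" for n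
      using h3_commutator_over_common_projection[OF sub normal \<open>\<gamma> \<in> \<Gamma> 0\<close> v] .
    then have "det2 (h3_p \<gamma>) v = 0"
      by (rule odo_free_central_trivial[OF free sub])
    with nonzero show False ..
  qed
qed

end
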